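(* Let $A$ be a non-empty set and $\theta\subseteq\mathbb{M}_A^2$ a congruence on the free magma $\mathbb{M}_A$. The following are equivalent: (1) $\mathbb{M}_A/\theta$ is equidecomposable; (2) $\theta$ is closed; (3) $\mathcal{G}(\theta)\subseteq (A\times\mathbb{M}_A)\cup(\mathbb{M}_A\times A)$.
   Context: $\mathbb{M}_A$ is the free magma on $A$ (non-associative words over $A$ with $x+y=(x,y)$). $\mathbb{M}_A^2$ has the componentwise operation. A congruence on a magma $M$ is an equivalence relation on $M$ that is a submagma of $M^2$. A magma is equidecomposable if $x+y=x'+y'$ implies $x=x'$ and $y=y'$. A subset $X$ of a magma is closed if $u+v\in X$ implies $u,v\in X$; here $\theta$ is closed as a subset of $\mathbb{M}_A^2$. For a submagma $S$ of $\mathbb{M}_A^2$, $\mathcal{G}(S)$ is the set of elements of $S$ that cannot be written as $u+v$ with $u,v\in S$ (its unique minimal generating set). *)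

theory Defs
  imports Main
begin

text \<open>Non-associative words over an alphabet; the free magma on A is the set of
  words all of whose letters lie in A, with operation x + y = Node x y.\<close>
datatype 'a word = Leaf 'a | Node "'a word" "'a word"

inductive_set free_magma :: "'a set \<Rightarrow> 'a word set" for A where
  leaf: "a \<in> A \<Longrightarrow> Leaf a \<in> free_magma A"
| node: "x \<in> free_magma A \<Longrightarrow> y \<in> free_magma A \<Longrightarrow> Node x y \<in> free_magma A"

definition pair_op :: "'a word \<times> 'a word \<Rightarrow> 'a word \<times> 'a word \<Rightarrow> 'a word \<times> 'a word" where
  "pair_op u v = (Node (fst u) (fst v), Node (snd u) (snd v))"

definition congruence :: "'a set \<Rightarrow> ('a word \<times> 'a word) set \<Rightarrow> bool" where
  "congruence A \<theta> \<longleftrightarrow> equiv (free_magma A) \<theta> \<and>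
     (\<forall>u\<in>\<theta>. \<forall>v\<in>\<theta>. pair_op u v \<in> \<theta>)"

definition quot_op :: "('a word \<times> 'a word) set \<Rightarrow> 'a word set \<Rightarrow> 'a word set \<Rightarrow> 'a word set" where
  "quot_op \<theta> X Y = \<theta> `` {Node (SOME x. x \<in> X) (SOME y. y \<in> Y)}"

definition equidecomposable :: "'m set \<Rightarrow> ('m \<Rightarrow> 'm \<Rightarrow> 'm) \<Rightarrow> bool" where
  "equidecomposable M f \<longleftrightarrow>
     (\<forall>x\<in>M. \<forall>y\<in>M. \<forall>x'\<in>M. \<forall>y'\<in>M. f x y = f x' y' \<longrightarrow> x = x' \<and> y = y')"

definition closed_set :: "'a set \<Rightarrow> ('a word \<times> 'a word) set \<Rightarrow> bool" where
  "closed_set A X \<longleftrightarrow> (\<forall>u\<in>free_magma A \<times> free_magma A. \<forall>v\<in>free_magma A \<times> free_magma A.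
     pair_op u v \<in> X \<longrightarrow> u \<in> X \<and> v \<in> X)"

definition gens :: "('a word \<times> 'a word) set \<Rightarrow> ('a word \<times> 'a word) set" where
  "gens S = {w \<in> S. \<not> (\<exists>u\<in>S. \<exists>v\<in>S. w = pair_op u v)}"

end

theory Submission
  imports Defs
begin

text \<open>All three conditions express the same cancellation property of \<theta>: whenever
  \<open>x + y\<close> and \<open>x' + y'\<close> are \<theta>-related, so are \<open>x, x'\<close> and \<open>y, y'\<close>. For the quotient this
  holds because classes are multiplied through representatives; for closedness it is the
  definition, as \<theta> lies in \<open>M\<^sub>A\<^sup>2\<close>. A pair of \<theta> whose components are both products
  is a sum of two pairs of \<theta> exactly when cancellation holds for it, whereas a pair with
  a letter as a component is never such a sum.\<close>

definition node_cancellative :: "('a word \<times> 'a word) set \<Rightarrow> bool" where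
  "node_cancellative \<theta> \<longleftrightarrow>
     (\<forall>x y x' y'. (Node x y, Node x' y') \<in> \<theta> \<longrightarrow> (x, x') \<in> \<theta> \<and> (y, y') \<in> \<theta>)"

lemma free_magma_NodeD:
  "Node x y \<in> free_magma A \<Longrightarrow> x \<in> free_magma A \<and> y \<in> free_magma A"
  by (erule free_magma.cases) auto

lemma free_magma_LeafD: "Leaf a \<in> free_magma A \<Longrightarrow> a \<in> A"
  by (erule free_magma.cases) auto

lemma pair_op_eq_Node_iff:
  "pair_op u v = (Node x y, Node x' y') \<longleftrightarrow> u = (x, x') \<and> v = (y, y')"
  by (cases u; cases v) (auto simp: pair_op_def)

lemma node_cancellativeD:
  assumes "node_cancellative \<theta>" and "pair_op u v \<in> \<theta>"
  shows "u \<in> \<theta> \<and> v \<in> \<theta>"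
  using assms unfolding node_cancellative_def pair_op_def by (metis prod.collapse)

lemma congruence_subset:
  "congruence A \<theta> \<Longrightarrow> \<theta> \<subseteq> free_magma A \<times> free_magma A"
  unfolding congruence_def equiv_def refl_on_def by blast

lemma Ball_quotient_iff: "(\<forall>X\<in>A // r. P X) \<longleftrightarrow> (\<forall>x\<in>A. P (r``{x}))"
  by (auto elim!: quotientE intro: quotientI)

lemma quot_op_classes:
  assumes cong: "congruence A \<theta>" and x: "x \<in> free_magma A" and y: "y \<in> free_magma A"
  shows "quot_op \<theta> (\<theta>``{x}) (\<theta>``{y}) = \<theta>``{Node x y}"
proof -
  have equiv: "equiv (free_magma A) \<theta>"
    and compat: "\<And>u v. u \<in> \<theta> \<Longrightarrow> v \<in> \<theta> \<Longrightarrow> pair_op u v \<in> \<theta>"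
    using cong unfolding congruence_def by auto
  define x' where "x' = (SOME z. z \<in> \<theta>``{x})"
  define y' where "y' = (SOME z. z \<in> \<theta>``{y})"
  have "x \<in> \<theta>``{x}" "y \<in> \<theta>``{y}"
    using equiv_class_self[OF equiv x] equiv_class_self[OF equiv y] .
  then have "(x, x') \<in> \<theta>" "(y, y') \<in> \<theta>"
    unfolding x'_def y'_def by (metis Image_singleton_iff someI)+
  then have "(Node x y, Node x' y') \<in> \<theta>"
    using compat[of "(x, x')" "(y, y')"] by (simp add: pair_op_def)
  then show ?thesis
    unfolding quot_op_def x'_def [symmetric] y'_def [symmetric]
    using equiv by (metis equiv_class_eq)
qed

lemma equidecomposable_quotient_iff_node_cancellative:
  assumes cong: "congruence A \<theta>"
  shows "equidecomposable (free_magma A // \<theta>) (quot_op \<theta>) \<longleftrightarrow> node_cancellative \<theta>"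
proof -
  let ?F = "free_magma A"
  have equiv: "equiv ?F \<theta>" and sub: "\<theta> \<subseteq> ?F \<times> ?F"
    using cong congruence_subset unfolding congruence_def by auto
  have class_eq: "\<theta>``{a} = \<theta>``{b} \<longleftrightarrow> (a, b) \<in> \<theta>" if "a \<in> ?F" "b \<in> ?F" for a b
    using eq_equiv_class_iff[OF equiv that] .
  have "equidecomposable (?F // \<theta>) (quot_op \<theta>) \<longleftrightarrow>
    (\<forall>x\<in>?F. \<forall>y\<in>?F. \<forall>x'\<in>?F. \<forall>y'\<in>?F.
       (Node x y, Node x' y') \<in> \<theta> \<longrightarrow> (x, x') \<in> \<theta> \<and> (y, y') \<in> \<theta>)"
    unfolding equidecomposable_def Ball_quotient_iff
    by (simp add: quot_op_classes[OF cong] class_eq free_magma.node)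
  also have "\<dots> \<longleftrightarrow> node_cancellative \<theta>"
    unfolding node_cancellative_def
    using sub by (blast dest: free_magma_NodeD)
  finally show ?thesis .
qed

lemma closed_set_iff_node_cancellative:
  assumes sub: "\<theta> \<subseteq> free_magma A \<times> free_magma A"
  shows "closed_set A \<theta> \<longleftrightarrow> node_cancellative \<theta>"
proof
  assume closed: "closed_set A \<theta>"
  show "node_cancellative \<theta>"
    unfolding node_cancellative_def
  proof (intro allI impI)
    fix x y x' y'
    assume xy: "(Node x y, Node x' y') \<in> \<theta>"
    then have "(x, x') \<in> free_magma A \<times> free_magma A" "(y, y') \<in> free_magma A \<times> free_magma A"
      using sub by (auto dest: free_magma_NodeD)
    moreover have "pair_op (x, x') (y, y') \<in> \<theta>"
      using xy by (simp add: pair_op_def)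
    ultimately show "(x, x') \<in> \<theta> \<and> (y, y') \<in> \<theta>"
      using closed unfolding closed_set_def by blast
  qed
qed (auto simp: closed_set_def dest: node_cancellativeD)

lemma node_cancellative_iff_gens_subset:
  assumes sub: "\<theta> \<subseteq> free_magma A \<times> free_magma A"
  shows "node_cancellative \<theta> \<longleftrightarrow>
    gens \<theta> \<subseteq> (Leaf ` A \<times> free_magma A) \<union> (free_magma A \<times> Leaf ` A)"
proof
  assume canc: "node_cancellative \<theta>"
  show "gens \<theta> \<subseteq> (Leaf ` A \<times> free_magma A) \<union> (free_magma A \<times> Leaf ` A)"
  proof
    fix w
    assume gen: "w \<in> gens \<theta>"
    then obtain p q where w: "w = (p, q)" and pq: "(p, q) \<in> \<theta>"
      unfolding gens_def by (cases w) auto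
    then have p: "p \<in> free_magma A" and q: "q \<in> free_magma A"
      using sub by auto
    show "w \<in> (Leaf ` A \<times> free_magma A) \<union> (free_magma A \<times> Leaf ` A)"
    proof (cases "p \<in> Leaf ` A \<or> q \<in> Leaf ` A")
      case True
      then show ?thesis using w p q by blast
    next
      case False
      then obtain a b c d where "p = Node a b" and "q = Node c d"
        using p q by (cases p; cases q) (auto dest: free_magma_LeafD)
      then have decomp: "w = pair_op (a, c) (b, d)"
        using w by (simp add: pair_op_def)
      moreover have "(a, c) \<in> \<theta> \<and> (b, d) \<in> \<theta>"
        using node_cancellativeD[OF canc] pq w decomp by metis
      ultimately show ?thesis
        using gen unfolding gens_def by blast
    qed
  qed
next
  assume gens_sub: "gens \<theta> \<subseteq> (Leaf ` A \<times> free_magma A) \<union> (free_magma A \<times> Leaf ` A)"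
  show "node_cancellative \<theta>"
    unfolding node_cancellative_def
  proof (intro allI impI)
    fix x y x' y'
    assume xy: "(Node x y, Node x' y') \<in> \<theta>"
    then have "(Node x y, Node x' y') \<notin> gens \<theta>"
      using gens_sub by auto
    then obtain u v where "u \<in> \<theta>" "v \<in> \<theta>" "(Node x y, Node x' y') = pair_op u v"
      using xy unfolding gens_def by blast
    then show "(x, x') \<in> \<theta> \<and> (y, y') \<in> \<theta>"
      by (metis pair_op_eq_Node_iff)
  qed
qed

theorem theorem6p4:
  fixes A :: "'a set" and \<theta> :: "('a word \<times> 'a word) set"
  assumes "A \<noteq> {}"
    and "congruence A \<theta>"
  shows "(equidecomposable (free_magma A // \<theta>) (quot_op \<theta>) \<longleftrightarrow> closed_set A \<theta>)
       \<and> (closed_set A \<theta> \<longleftrightarrow>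
            gens \<theta> \<subseteq> ((Leaf ` A) \<times> free_magma A) \<union> (free_magma A \<times> (Leaf ` A)))"
proof -
  have sub: "\<theta> \<subseteq> free_magma A \<times> free_magma A"
    using assms(2) by (rule congruence_subset)
  show ?thesis
    using equidecomposable_quotient_iff_node_cancellative[OF assms(2)]
      closed_set_iff_node_cancellative[OF sub] node_cancellative_iff_gens_subset[OF sub]
    by blast
qed

end
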